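(* Let $T$ be a rooted binary tree on $n$ leaves with minimal Colless index, i.e. $\mathcal{C}(T)=c_n$. Then $T$ has minimal Sackin index among all rooted binary trees with $n$ leaves.
   Context: A rooted binary tree with $n\geq 2$ leaves is a rooted tree whose root has degree 2 and all other internal nodes have degree 3; for $n=1$ it is a single node. For a node $u$ let $n_u$ be the number of leaves of the subtree rooted at $u$. For an internal node $v$ with children $v_1,v_2$, the Colless index is $\mathcal{C}(T)=\sum_v|n_{v_1}-n_{v_2}|$ over internal nodes $v$; $c_n$ is its minimum over rooted binary trees with $n$ leaves. The Sackin index is $\mathcal{S}(T)=\sum_{u}n_u$, the sum over all internal nodes $u$ of $T$. *)

theory Defs
  imports Main
begin

text \<open>Rooted binary trees (shapes). A single leaf is a tree on 1 leaf; an internal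
node has exactly two children. Children are ordered in the datatype, but all
indices below are symmetric in the children.\<close>
datatype rbtree = Leaf | Node rbtree rbtree

fun leaves :: "rbtree \<Rightarrow> nat" where
  "leaves Leaf = 1"
| "leaves (Node l r) = leaves l + leaves r"

fun colless :: "rbtree \<Rightarrow> nat" where
  "colless Leaf = 0"
| "colless (Node l r) =
     nat \<bar>int (leaves l) - int (leaves r)\<bar> + colless l + colless r"

fun sackin :: "rbtree \<Rightarrow> nat" where
  "sackin Leaf = 0"
| "sackin (Node l r) = leaves l + leaves r + sackin l + sackin r"

definition min_colless :: "nat \<Rightarrow> nat" where
  "min_colless n = (LEAST c. \<exists>T. leaves T = n \<and> colless T = c)"

end

theory Submission
  imports Defs
begin

text \<open>Let c(n) and s(n) be the Colless and Sackin indices of the maximally balanced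
tree on n leaves, whose nodes split their m leaves into \<lceil>m/2\<rceil> and \<lfloor>m/2\<rfloor>. Regrouping
halves gives c(a + b) \<le> |a - b| + c(a) + c(b) and s(a + b) \<le> a + b + s(a) + s(b), so c and s
are the minimal indices. In a Colless-minimal tree every node, with split (a, b), attains
equality in the first inequality; by the same induction this forces that no power of two lies
strictly between a and b, and for such splits the second inequality is an equality. Hence
the tree has Sackin index s(n).\<close>

fun maxbal :: "nat \<Rightarrow> rbtree" where
  "maxbal n = (if n \<le> 1 then Leaf else Node (maxbal (n - n div 2)) (maxbal (n div 2)))"

declare maxbal.simps[simp del]

lemma maxbal_le_1 [simp]: "n \<le> 1 \<Longrightarrow> maxbal n = Leaf"
  by (simp add: maxbal.simps)

lemma maxbal_ge_2: "2 \<le> n \<Longrightarrow> maxbal n = Node (maxbal (n - n div 2)) (maxbal (n div 2))"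
  by (simp add: maxbal.simps)

lemma leaves_maxbal: "1 \<le> n \<Longrightarrow> leaves (maxbal n) = n"
proof (induction n rule: less_induct)
  case (less n)
  then show ?case by (cases "n = 1") (simp_all add: maxbal_ge_2)
qed

text \<open>\<lceil>a/2\<rceil> + \<lfloor>b/2\<rfloor> and \<lfloor>a/2\<rfloor> + \<lceil>b/2\<rceil> are the two halves of a + b, in some order.\<close>
lemma halves_add:
  fixes f :: "nat \<Rightarrow> 'a::comm_monoid_add"
  shows "f (a + b - (a + b) div 2) + f ((a + b) div 2)
       = f (a - a div 2 + b div 2) + f (a div 2 + (b - b div 2))"
proof -
  have "(a - a div 2 + b div 2 = a + b - (a + b) div 2 \<and> a div 2 + (b - b div 2) = (a + b) div 2)
       \<or> (a - a div 2 + b div 2 = (a + b) div 2 \<and> a div 2 + (b - b div 2) = a + b - (a + b) div 2)"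
    by (cases "even a"; cases "even b") (auto elim!: evenE oddE)
  then show ?thesis by (auto simp: add.commute)
qed

lemma colless_maxbal:
  assumes "2 \<le> n"
  shows "colless (maxbal n) = colless (maxbal (n - n div 2)) + colless (maxbal (n div 2)) + n mod 2"
proof -
  have "nat \<bar>int (n - n div 2) - int (n div 2)\<bar> = n mod 2"
    by (cases "even n") (auto elim!: evenE oddE)
  with assms show ?thesis by (simp add: maxbal_ge_2 leaves_maxbal)
qed

lemma sackin_maxbal:
  assumes "2 \<le> n"
  shows "sackin (maxbal n) = n + sackin (maxbal (n - n div 2)) + sackin (maxbal (n div 2))"
  using assms by (simp add: maxbal_ge_2 leaves_maxbal)

lemma colless_maxbal_add:
  assumes "2 \<le> a + b"
  shows "colless (maxbal (a + b)) = colless (maxbal (a - a div 2 + b div 2))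
           + colless (maxbal (a div 2 + (b - b div 2))) + (a + b) mod 2"
  using colless_maxbal[OF assms] halves_add[of "\<lambda>n. colless (maxbal n)" a b] by simp

lemma sackin_maxbal_add:
  assumes "2 \<le> a + b"
  shows "sackin (maxbal (a + b)) = a + b + sackin (maxbal (a - a div 2 + b div 2))
           + sackin (maxbal (a div 2 + (b - b div 2)))"
  using sackin_maxbal[OF assms] halves_add[of "\<lambda>n. sackin (maxbal n)" a b] by simp

definition no_pow2_between :: "nat \<Rightarrow> nat \<Rightarrow> bool" where
  "no_pow2_between a b \<longleftrightarrow> (\<nexists>k. min a b < 2 ^ k \<and> 2 ^ k < max a b)"

lemma no_pow2_between_commute: "no_pow2_between a b \<longleftrightarrow> no_pow2_between b a"
  by (simp add: no_pow2_between_def min.commute max.commute)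

lemma no_pow2_between_1_iff: "no_pow2_between 1 b \<longleftrightarrow> b \<le> 2"
proof
  assume "no_pow2_between 1 b"
  then have "\<not> (min 1 b < 2 ^ 1 \<and> 2 ^ 1 < max 1 b)"
    unfolding no_pow2_between_def by blast
  then show "b \<le> 2" by auto
next
  assume "b \<le> 2"
  moreover have "2 ^ k < (2::nat) \<Longrightarrow> k = 0" for k by (cases k) auto
  ultimately show "no_pow2_between 1 b" unfolding no_pow2_between_def by (auto simp: max_def)
qed

lemma between_halves_double:
  fixes a b q :: nat
  assumes "min (a - a div 2) (b div 2) < q" "q < max (a - a div 2) (b div 2)"
  shows "min a b < 2 * q \<and> 2 * q < max a b"
  using assms
  by (cases "even a"; cases "even b") (auto elim!: evenE oddE simp: min_def max_def split: if_splits)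

lemma between_double_halves:
  fixes a b q :: nat
  assumes "a < 2 * q" "2 * q < b"
  shows "a div 2 < q \<and> q < b - b div 2"
  using assms by (cases "even a"; cases "even b") (auto elim!: evenE oddE)

lemma no_pow2_between_iff_halves:
  assumes "1 \<le> a" "1 \<le> b"
  shows "no_pow2_between a b \<longleftrightarrow>
    no_pow2_between (a - a div 2) (b div 2) \<and> no_pow2_between (a div 2) (b - b div 2)"
proof safe
  show "no_pow2_between (a - a div 2) (b div 2)" if "no_pow2_between a b"
    using that between_halves_double[of a b] unfolding no_pow2_between_def
    by (metis power_Suc)
  show "no_pow2_between (a div 2) (b - b div 2)" if "no_pow2_between a b"
    using that between_halves_double[of b a] unfolding no_pow2_between_def
    by (metis power_Suc min.commute max.commute)
next
  assume h1: "no_pow2_between (a - a div 2) (b div 2)"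
    and h2: "no_pow2_between (a div 2) (b - b div 2)"
  show "no_pow2_between a b"
    unfolding no_pow2_between_def
  proof
    assume "\<exists>k. min a b < 2 ^ k \<and> 2 ^ k < max a b"
    then obtain k where k: "min a b < 2 ^ k" "2 ^ k < max a b" by blast
    with assms obtain j where j: "k = Suc j" by (cases k) (auto simp: min_def split: if_splits)
    show False
    proof (cases "a \<le> b")
      case True
      then have "a div 2 < 2 ^ j \<and> 2 ^ j < b - b div 2"
        using k j between_double_halves[of a "2 ^ j" b] by simp
      with h2 show False unfolding no_pow2_between_def
        by (metis max.strict_coboundedI2 min.strict_coboundedI1)
    next
      case False
      then have "b div 2 < 2 ^ j \<and> 2 ^ j < a - a div 2"
        using k j between_double_halves[of b "2 ^ j" a] by simp
      with h1 show False unfolding no_pow2_between_def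
        by (metis max.strict_coboundedI1 min.strict_coboundedI2)
    qed
  qed
qed

text \<open>The halving recurrences do not apply to a single leaf, so splits (1, y) are treated
separately.\<close>
lemma colless_maxbal_Suc:
  assumes "2 \<le> y"
  shows "colless (maxbal (Suc y)) + colless (maxbal (y div 2)) + y mod 2
       = colless (maxbal (Suc (y div 2))) + colless (maxbal y) + Suc y mod 2"
  using colless_maxbal_add[of 1 y] colless_maxbal[of y] assms by simp

lemma colless_maxbal_Suc_le: "1 \<le> y \<Longrightarrow> colless (maxbal (Suc y)) \<le> y - 1 + colless (maxbal y)"
proof (induction y rule: less_induct)
  case (less y)
  show ?case
  proof (cases "y = 1")
    case True
    then show ?thesis by (simp add: numeral_2_eq_2 [symmetric] colless_maxbal)
  next
    case False
    with less.prems have y: "2 \<le> y" by simp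
    have "colless (maxbal (Suc (y div 2))) \<le> y div 2 - 1 + colless (maxbal (y div 2))"
      using less.IH y by simp
    moreover have "y div 2 - 1 + Suc y mod 2 \<le> y - 1 + y mod 2"
      using y by (cases "even y") (auto elim!: evenE oddE)
    ultimately show ?thesis using colless_maxbal_Suc[OF y] by linarith
  qed
qed

lemma colless_maxbal_Suc_less:
  assumes "3 \<le> y"
  shows "colless (maxbal (Suc y)) < y - 1 + colless (maxbal y)"
proof -
  have "colless (maxbal (Suc (y div 2))) \<le> y div 2 - 1 + colless (maxbal (y div 2))"
    using colless_maxbal_Suc_le assms by simp
  moreover have "y div 2 - 1 + Suc y mod 2 < y - 1 + y mod 2"
    using assms by (cases "even y") (auto elim!: evenE oddE)
  ultimately show ?thesis using colless_maxbal_Suc[of y] assms by linarith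
qed

lemma imbalance_halves_le:
  fixes a b :: nat
  shows "nat \<bar>int (a - a div 2) - int (b div 2)\<bar> + nat \<bar>int (a div 2) - int (b - b div 2)\<bar>
         + (a + b) mod 2
       \<le> nat \<bar>int a - int b\<bar> + a mod 2 + b mod 2"
  by (cases "even a"; cases "even b") (auto elim!: evenE oddE simp: abs_if)

lemma halves_add_less:
  fixes a b :: nat
  assumes "2 \<le> a" "2 \<le> b"
  shows "a - a div 2 + b div 2 < a + b" "a div 2 + (b - b div 2) < a + b"
  using assms by auto

lemma colless_maxbal_add_le:
  "colless (maxbal (a + b)) \<le> nat \<bar>int a - int b\<bar> + colless (maxbal a) + colless (maxbal b)"
proof (induction "a + b" arbitrary: a b rule: less_induct)
  case less
  consider "a = 0 \<or> b = 0" | "a = 1" "1 \<le> b" | "b = 1" "1 \<le> a" | "2 \<le> a" "2 \<le> b"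
    by linarith
  then show ?case
  proof cases
    case 1
    then show ?thesis by auto
  next
    case 2
    then show ?thesis using colless_maxbal_Suc_le[of b] by simp
  next
    case 3
    then show ?thesis using colless_maxbal_Suc_le[of a] by simp
  next
    case 4
    let ?A = "a - a div 2" and ?a = "a div 2" and ?B = "b - b div 2" and ?b = "b div 2"
    have ab: "2 \<le> a + b" using 4 by simp
    have "colless (maxbal (?A + ?b)) \<le> nat \<bar>int ?A - int ?b\<bar> + colless (maxbal ?A) + colless (maxbal ?b)"
      and "colless (maxbal (?a + ?B)) \<le> nat \<bar>int ?a - int ?B\<bar> + colless (maxbal ?a) + colless (maxbal ?B)"
      using less.hyps[OF halves_add_less(1)[OF 4]] less.hyps[OF halves_add_less(2)[OF 4]] .
    then show ?thesis
      using colless_maxbal_add[OF ab] colless_maxbal[OF 4(1)] colless_maxbal[OF 4(2)]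
        imbalance_halves_le[of a b]
      by linarith
  qed
qed

lemma no_pow2_between_if_colless_maxbal_add_eq:
  assumes "1 \<le> a" "1 \<le> b"
    and "colless (maxbal (a + b)) = nat \<bar>int a - int b\<bar> + colless (maxbal a) + colless (maxbal b)"
  shows "no_pow2_between a b"
  using assms
proof (induction "a + b" arbitrary: a b rule: less_induct)
  case less
  consider "a = 1" | "b = 1" | "2 \<le> a" "2 \<le> b"
    using less.prems by linarith
  then show ?case
  proof cases
    case 1
    with less.prems have "\<not> 3 \<le> b" using colless_maxbal_Suc_less[of b] by auto
    then show ?thesis unfolding 1 no_pow2_between_1_iff by simp
  next
    case 2
    with less.prems have "\<not> 3 \<le> a" using colless_maxbal_Suc_less[of a] by auto
    then show ?thesis unfolding 2 no_pow2_between_commute[of a] no_pow2_between_1_iff by simp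
  next
    case 3
    let ?A = "a - a div 2" and ?a = "a div 2" and ?B = "b - b div 2" and ?b = "b div 2"
    have ab: "2 \<le> a + b" using 3 by simp
    have eqs:
      "colless (maxbal (?A + ?b)) = nat \<bar>int ?A - int ?b\<bar> + colless (maxbal ?A) + colless (maxbal ?b)"
      "colless (maxbal (?a + ?B)) = nat \<bar>int ?a - int ?B\<bar> + colless (maxbal ?a) + colless (maxbal ?B)"
      using colless_maxbal_add_le[of ?A ?b] colless_maxbal_add_le[of ?a ?B] less.prems(3)
        colless_maxbal_add[OF ab] colless_maxbal[OF 3(1)] colless_maxbal[OF 3(2)]
        imbalance_halves_le[of a b]
      by linarith+
    have "no_pow2_between ?A ?b" "no_pow2_between ?a ?B"
      using less.hyps[OF halves_add_less(1)[OF 3] _ _ eqs(1)]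
        less.hyps[OF halves_add_less(2)[OF 3] _ _ eqs(2)] 3
      by simp_all
    with 3 show ?thesis by (simp add: no_pow2_between_iff_halves)
  qed
qed

lemma sackin_maxbal_Suc_le: "sackin (maxbal (Suc y)) \<le> Suc y + sackin (maxbal y)"
proof (induction y rule: less_induct)
  case (less y)
  show ?case
  proof (cases "y \<le> 1")
    case True
    then show ?thesis by (auto simp: le_Suc_eq numeral_2_eq_2 [symmetric] sackin_maxbal)
  next
    case False
    then have y: "2 \<le> y" by simp
    have "sackin (maxbal (Suc (y div 2))) \<le> Suc (y div 2) + sackin (maxbal (y div 2))"
      using less.IH y by simp
    moreover have "Suc (y div 2) \<le> y" using y by simp
    ultimately show ?thesis using sackin_maxbal_add[of 1 y] sackin_maxbal[of y] y by simp
  qed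
qed

lemma sackin_maxbal_add_le: "sackin (maxbal (a + b)) \<le> a + b + sackin (maxbal a) + sackin (maxbal b)"
proof (induction "a + b" arbitrary: a b rule: less_induct)
  case less
  consider "a = 0 \<or> b = 0" | "a = 1" | "b = 1" | "2 \<le> a" "2 \<le> b"
    by linarith
  then show ?case
  proof cases
    case 1
    then show ?thesis by auto
  next
    case 2
    then show ?thesis using sackin_maxbal_Suc_le[of b] by simp
  next
    case 3
    then show ?thesis using sackin_maxbal_Suc_le[of a] by simp
  next
    case 4
    let ?A = "a - a div 2" and ?a = "a div 2" and ?B = "b - b div 2" and ?b = "b div 2"
    have ab: "2 \<le> a + b" using 4 by simp
    have "sackin (maxbal (?A + ?b)) \<le> ?A + ?b + sackin (maxbal ?A) + sackin (maxbal ?b)"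
      and "sackin (maxbal (?a + ?B)) \<le> ?a + ?B + sackin (maxbal ?a) + sackin (maxbal ?B)"
      using less.hyps[OF halves_add_less(1)[OF 4]] less.hyps[OF halves_add_less(2)[OF 4]] .
    then show ?thesis
      using sackin_maxbal_add[OF ab] sackin_maxbal[OF 4(1)] sackin_maxbal[OF 4(2)]
      by linarith
  qed
qed

lemma sackin_maxbal_add_eq:
  assumes "1 \<le> a" "1 \<le> b" "no_pow2_between a b"
  shows "sackin (maxbal (a + b)) = a + b + sackin (maxbal a) + sackin (maxbal b)"
  using assms
proof (induction "a + b" arbitrary: a b rule: less_induct)
  case less
  have sackin_maxbal_small: "sackin (maxbal 2) = 2" "sackin (maxbal 3) = 5"
    by (simp_all add: sackin_maxbal)
  consider "a = 1" | "b = 1" | "2 \<le> a" "2 \<le> b"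
    using less.prems by linarith
  then show ?case
  proof cases
    case 1
    with less.prems have "b = 1 \<or> b = 2" unfolding 1 no_pow2_between_1_iff by auto
    with 1 show ?thesis using sackin_maxbal_small by (auto simp: numeral_eq_Suc)
  next
    case 2
    with less.prems have "a = 1 \<or> a = 2"
      unfolding 2 no_pow2_between_commute[of a] no_pow2_between_1_iff by auto
    with 2 show ?thesis using sackin_maxbal_small by (auto simp: numeral_eq_Suc)
  next
    case 3
    let ?A = "a - a div 2" and ?a = "a div 2" and ?B = "b - b div 2" and ?b = "b div 2"
    have ab: "2 \<le> a + b" using 3 by simp
    have "no_pow2_between ?A ?b" "no_pow2_between ?a ?B"
      using less.prems no_pow2_between_iff_halves by blast+
    then have "sackin (maxbal (?A + ?b)) = ?A + ?b + sackin (maxbal ?A) + sackin (maxbal ?b)"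
      and "sackin (maxbal (?a + ?B)) = ?a + ?B + sackin (maxbal ?a) + sackin (maxbal ?B)"
      using less.hyps[OF halves_add_less(1)[OF 3]] less.hyps[OF halves_add_less(2)[OF 3]] 3
      by simp_all
    then show ?thesis
      using sackin_maxbal_add[OF ab] sackin_maxbal[OF 3(1)] sackin_maxbal[OF 3(2)]
      by linarith
  qed
qed

lemma leaves_ge_1: "1 \<le> leaves T"
  by (induction T) auto

lemma colless_maxbal_le: "colless (maxbal (leaves T)) \<le> colless T"
proof (induction T)
  case (Node l r)
  then show ?case using colless_maxbal_add_le[of "leaves l" "leaves r"] by simp
qed simp

lemma sackin_maxbal_le: "sackin (maxbal (leaves T)) \<le> sackin T"
proof (induction T)
  case (Node l r)
  then show ?case using sackin_maxbal_add_le[of "leaves l" "leaves r"] by simp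
qed simp

lemma min_colless_eq_colless_maxbal:
  assumes "1 \<le> n"
  shows "min_colless n = colless (maxbal n)"
  unfolding min_colless_def
proof (rule Least_equality)
  show "\<exists>T. leaves T = n \<and> colless T = colless (maxbal n)"
    using leaves_maxbal[OF assms] by blast
  show "colless (maxbal n) \<le> c" if "\<exists>T. leaves T = n \<and> colless T = c" for c
    using that colless_maxbal_le by blast
qed

lemma sackin_eq_sackin_maxbal_if_colless_eq:
  "colless T = colless (maxbal (leaves T)) \<Longrightarrow> sackin T = sackin (maxbal (leaves T))"
proof (induction T)
  case (Node l r)
  let ?a = "leaves l" and ?b = "leaves r"
  have "colless (maxbal (?a + ?b)) \<le> nat \<bar>int ?a - int ?b\<bar> + colless (maxbal ?a) + colless (maxbal ?b)"
    by (rule colless_maxbal_add_le)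
  moreover have "colless (maxbal ?a) \<le> colless l" "colless (maxbal ?b) \<le> colless r"
    by (rule colless_maxbal_le)+
  ultimately have "colless l = colless (maxbal ?a)" "colless r = colless (maxbal ?b)"
    and "colless (maxbal (?a + ?b)) = nat \<bar>int ?a - int ?b\<bar> + colless (maxbal ?a) + colless (maxbal ?b)"
    using Node.prems by simp_all
  then have "sackin l = sackin (maxbal ?a)" "sackin r = sackin (maxbal ?b)"
    and "no_pow2_between ?a ?b"
    using Node.IH no_pow2_between_if_colless_maxbal_add_eq leaves_ge_1 by simp_all
  then show ?case using sackin_maxbal_add_eq leaves_ge_1 by simp
qed simp

theorem proposition3:
  fixes T :: rbtree and n :: nat
  assumes "leaves T = n"
    and "colless T = min_colless n"
  shows "\<forall>T'. leaves T' = n \<longrightarrow> sackin T \<le> sackin T'"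
proof (intro allI impI)
  fix T' assume "leaves T' = n"
  have "colless T = colless (maxbal n)"
    using assms min_colless_eq_colless_maxbal leaves_ge_1 by metis
  then have "sackin T = sackin (maxbal n)"
    using sackin_eq_sackin_maxbal_if_colless_eq assms(1) by simp
  also have "\<dots> \<le> sackin T'"
    using sackin_maxbal_le[of T'] \<open>leaves T' = n\<close> by simp
  finally show "sackin T \<le> sackin T'" .
qed

end
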